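(* Let $R$ and $S$ be rings, where $S$ is both $2$-torsion-free and $3$-torsion-free, and let $\varphi:R\to S$ be an additive map with $\varphi(T(R))\subseteq T(S)$. If $a,b\in R$ are tripotents with $ab=ba=0$, then $\varphi(a)\varphi(b)=\varphi(b)\varphi(a)=0$.
   Context: For a ring $A$, $T(A)=\{a\in A: a^3=a\}$ is the set of tripotents. A ring $S$ is $n$-torsion-free if $ns=0$ implies $s=0$. *)

theory Defs
  imports Main
begin

text \<open>Rings need not be unital: we use the type class ring (no 1 required).\<close>

definition tripotents :: "'a::ring set" where
  "tripotents = {a. a * a * a = a}"

text \<open>n-fold sum n s = s + ... + s (n times), avoiding numerals in non-unital rings.\<close>
definition ntimes :: "nat \<Rightarrow> 'a::comm_monoid_add \<Rightarrow> 'a" where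
  "ntimes n s = (\<Sum>i<n. s)"

definition torsion_free :: "nat \<Rightarrow> 'a::ring itself \<Rightarrow> bool" where
  "torsion_free n _ \<longleftrightarrow> (\<forall>s::'a. ntimes n s = 0 \<longrightarrow> s = 0)"

definition additive :: "('a::ring \<Rightarrow> 'b::ring) \<Rightarrow> bool" where
  "additive f \<longleftrightarrow> (\<forall>x y. f (x + y) = f x + f y)"

end

theory Submission
  imports Defs
begin

(* For tripotents x, y with x + y and x - y also tripotent, expanding the two cubes shows
   that the mixed term c = x^2 y + x y x + y x^2 satisfies 2c = 0, hence c = 0.
   Multiplying c by x on the left and on the right and using x^3 = x gives xy = yx;
   then c = 3 x^2 y, so x^2 y = 0 and xy = x (x^2 y) = 0.  Orthogonal tripotents a, b
   have a + b and a - b tripotent, and additivity carries this over to phi a and phi b. *)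

lemma ntimes_two: "ntimes 2 s = s + s"
  by (simp add: ntimes_def numeral_2_eq_2)

lemma ntimes_three: "ntimes 3 s = s + s + s"
  by (simp add: ntimes_def numeral_3_eq_3 add.assoc)

lemma torsion_free_twoD:
  fixes s :: "'a::ring"
  assumes "torsion_free 2 TYPE('a)" and "s + s = 0"
  shows "s = 0"
  using assms unfolding torsion_free_def ntimes_two by blast

lemma torsion_free_threeD:
  fixes s :: "'a::ring"
  assumes "torsion_free 3 TYPE('a)" and "s + s + s = 0"
  shows "s = 0"
  using assms unfolding torsion_free_def ntimes_three by blast

lemma additive_diff:
  assumes "additive f"
  shows "f (x - y) = f x - f y"
proof -
  have "f (x - y) + f y = f x"
    using assms unfolding additive_def by (metis diff_add_cancel)
  then show ?thesis
    by (simp add: eq_diff_eq)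
qed

definition cube_cross :: "'a::ring \<Rightarrow> 'a \<Rightarrow> 'a" where
  "cube_cross x y = x * x * y + x * y * x + y * x * x"

lemma cube_add:
  fixes x y :: "'a::ring"
  shows "(x + y) * (x + y) * (x + y) = x * x * x + y * y * y + cube_cross x y + cube_cross y x"
  by (simp add: cube_cross_def algebra_simps)

lemma cube_diff:
  fixes x y :: "'a::ring"
  shows "(x - y) * (x - y) * (x - y) = x * x * x - y * y * y - cube_cross x y + cube_cross y x"
  by (simp add: cube_cross_def algebra_simps)

lemma cube_cross_orthogonal:
  fixes x y :: "'a::ring"
  assumes "x * y = 0" and "y * x = 0"
  shows "cube_cross x y = 0"
  using assms by (simp add: cube_cross_def mult.assoc)

lemma tripotents_add_orthogonal:
  assumes "a \<in> tripotents" and "b \<in> tripotents" and "a * b = 0" and "b * a = 0"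
  shows "a + b \<in> tripotents" and "a - b \<in> tripotents"
  using assms
  by (simp_all add: tripotents_def cube_add cube_diff cube_cross_orthogonal)

lemma cube_cross_zero_if_tripotents_add_diff:
  fixes x y :: "'a::ring"
  assumes "torsion_free 2 TYPE('a)"
    and "x \<in> tripotents" and "y \<in> tripotents"
    and "x + y \<in> tripotents" and "x - y \<in> tripotents"
  shows "cube_cross x y = 0"
proof -
  have sum: "cube_cross x y + cube_cross y x = 0"
    using assms(2-4) by (simp add: tripotents_def cube_add add.assoc)
  have diff: "cube_cross y x = cube_cross x y"
    using assms(2,3,5) by (simp add: tripotents_def cube_diff)
  show ?thesis
    using torsion_free_twoD[OF assms(1)] sum unfolding diff by blast
qed

lemma commute_if_cube_cross_zero:
  fixes x y :: "'a::ring"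
  assumes x: "x * x * x = x" and c: "cube_cross x y = 0"
  shows "x * y = y * x"
proof -
  have x_left: "x * (x * (x * z)) = x * z" and x_right: "z * x * x * x = z * x" for z
    using x by (metis mult.assoc)+
  have "x * cube_cross x y = x * y + (x * x * y * x + x * y * x * x)"
    by (simp add: cube_cross_def distrib_left mult.assoc x_left add.assoc)
  moreover have "cube_cross x y * x = y * x + (x * x * y * x + x * y * x * x)"
    using x_right[of y] by (simp add: cube_cross_def distrib_right mult.assoc add_ac)
  ultimately have "x * y + (x * x * y * x + x * y * x * x) = y * x + (x * x * y * x + x * y * x * x)"
    using c by simp
  then show ?thesis
    by simp
qed

lemma mult_zero_if_cube_cross_zero:
  fixes x y :: "'a::ring"
  assumes "torsion_free 3 TYPE('a)" and x: "x * x * x = x" and c: "cube_cross x y = 0"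
  shows "x * y = 0"
proof -
  have xy: "x * y = y * x"
    using commute_if_cube_cross_zero[OF x c] .
  have "x * x * y + x * x * y + x * x * y = 0"
    using c unfolding cube_cross_def by (metis xy mult.assoc)
  then have "x * x * y = 0"
    using torsion_free_threeD[OF assms(1)] by blast
  then show ?thesis
    using x by (metis mult.assoc mult_zero_right)
qed

lemma tripotents_orthogonal_if_add_diff:
  fixes x y :: "'a::ring"
  assumes "torsion_free 2 TYPE('a)" and "torsion_free 3 TYPE('a)"
    and "x \<in> tripotents" and "y \<in> tripotents"
    and "x + y \<in> tripotents" and "x - y \<in> tripotents"
  shows "x * y = 0 \<and> y * x = 0"
proof -
  have c: "cube_cross x y = 0"
    using cube_cross_zero_if_tripotents_add_diff assms(1,3-6) .
  have "x * y = 0"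
    using mult_zero_if_cube_cross_zero[OF assms(2) _ c] assms(3) by (simp add: tripotents_def)
  moreover have "x * y = y * x"
    using commute_if_cube_cross_zero[OF _ c] assms(3) by (simp add: tripotents_def)
  ultimately show ?thesis
    by simp
qed

theorem lemma6p1:
  fixes \<phi> :: "'r::ring \<Rightarrow> 's::ring"
  assumes "torsion_free 2 TYPE('s)"
    and "torsion_free 3 TYPE('s)"
    and "additive \<phi>"
    and "\<phi> ` tripotents \<subseteq> tripotents"
    and "a \<in> tripotents" and "b \<in> tripotents"
    and "a * b = 0" and "b * a = 0"
  shows "\<phi> a * \<phi> b = 0 \<and> \<phi> b * \<phi> a = 0"
proof (rule tripotents_orthogonal_if_add_diff[OF assms(1,2)])
  have "\<phi> (a + b) \<in> tripotents" and "\<phi> (a - b) \<in> tripotents"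
    using tripotents_add_orthogonal[OF assms(5-8)] assms(4) by blast+
  then show "\<phi> a + \<phi> b \<in> tripotents" and "\<phi> a - \<phi> b \<in> tripotents"
    using assms(3) by (simp_all add: additive_def additive_diff)
  show "\<phi> a \<in> tripotents" and "\<phi> b \<in> tripotents"
    using assms(4-6) by blast+
qed

end
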